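(* Let $n=2^r$, $a\in\mathbb{Z}_{2n}^*$ and $b\in 2\mathbb{Z}_{2n}$. Then $\mathrm{SD}(n,R,T)\cong\mathrm{SD}(n,aR,b+aT)$ and $\mathrm{PSD}(n,R,T)\cong\mathrm{PSD}(n,R,n+T)$.
   Context: For a group $G$ and inverse-closed $S\subseteq G\setminus\{1\}$, $\mathrm{Cay}(G,S)$ has vertex set $G$, with $g,h$ adjacent iff $g^{-1}h\in S$. $\mathrm{SD}_n=\langle\rho,\tau\mid\rho^{2n}=\tau^2=1,\ \tau\rho\tau=\rho^{n-1}\rangle$ and $\mathrm{PSD}_n=\langle\rho,\tau\mid\rho^{2n}=\tau^2=1,\ \tau\rho\tau=\rho^{n+1}\rangle$. For $R=-R\subseteq\mathbb{Z}_{2n}\setminus\{0\}$ and $T=(n+1)T\subseteq\mathbb{Z}_{2n}$, $\mathrm{SD}(n,R,T)=\mathrm{Cay}(\mathrm{SD}_n,\{\rho^i:i\in R\}\cup\{\rho^j\tau:j\in T\})$; for $R=-R\subseteq\mathbb{Z}_{2n}\setminus\{0\}$ and $T=(n-1)T\subseteq\mathbb{Z}_{2n}$, $\mathrm{PSD}(n,R,T)=\mathrm{Cay}(\mathrm{PSD}_n,\{\rho^i:i\in R\}\cup\{\rho^j\tau:j\in T\})$. Here $cI=\{cx:x\in I\}$ and $c+I=\{c+x:x\in I\}$ for $I\subseteq\mathbb{Z}_{2n}$, and $\mathbb{Z}_{2n}^*$ is the unit group of $\mathbb{Z}_{2n}$. *)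

theory Defs
  imports "HOL-Algebra.Group" "HOL-Computational_Algebra.Primes"
begin

text \<open>Concrete model of the group generated by rho, tau with rho^(2n) = tau^2 = 1 and
  tau rho tau = rho^k (k^2 = 1 mod 2n): the element (i,e) with 0 <= i < 2n, e in {0,1}
  stands for rho^i tau^e, and (rho^i tau^e)(rho^j tau^f) = rho^(i + k^e j) tau^(e+f).\<close>

definition rt_group :: "nat \<Rightarrow> int \<Rightarrow> (int \<times> int) monoid" where
  "rt_group n k = \<lparr> carrier = {0..<2 * int n} \<times> {0, 1},
     monoid.mult = (\<lambda>x y. ((fst x + k ^ nat (snd x) * fst y) mod (2 * int n), (snd x + snd y) mod 2)),
     one = (0, 0) \<rparr>"

definition SD_group :: "nat \<Rightarrow> (int \<times> int) monoid" where
  "SD_group n = rt_group n (int n - 1)"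

definition PSD_group :: "nat \<Rightarrow> (int \<times> int) monoid" where
  "PSD_group n = rt_group n (int n + 1)"

text \<open>Subsets of Z_(2n) are represented as sets of integers in {0..<2n}.\<close>

definition zscale :: "nat \<Rightarrow> int \<Rightarrow> int set \<Rightarrow> int set" where
  "zscale n c I = (\<lambda>x. (c * x) mod (2 * int n)) ` I"

definition zshift :: "nat \<Rightarrow> int \<Rightarrow> int set \<Rightarrow> int set" where
  "zshift n c I = (\<lambda>x. (c + x) mod (2 * int n)) ` I"

definition conn_set :: "int set \<Rightarrow> int set \<Rightarrow> (int \<times> int) set" where
  "conn_set R T = {(i, 0) | i. i \<in> R} \<union> {(j, 1) | j. j \<in> T}"

definition cay_adj :: "('a, 'b) monoid_scheme \<Rightarrow> 'a set \<Rightarrow> 'a \<Rightarrow> 'a \<Rightarrow> bool" where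
  "cay_adj G S g h \<longleftrightarrow> g \<in> carrier G \<and> h \<in> carrier G \<and> inv\<^bsub>G\<^esub> g \<otimes>\<^bsub>G\<^esub> h \<in> S"

definition cay_iso :: "('a, 'b) monoid_scheme \<Rightarrow> 'a set \<Rightarrow> ('c, 'd) monoid_scheme \<Rightarrow> 'c set \<Rightarrow> bool" where
  "cay_iso G S H S' \<longleftrightarrow> (\<exists>f. bij_betw f (carrier G) (carrier H) \<and>
     (\<forall>x \<in> carrier G. \<forall>y \<in> carrier G. cay_adj G S x y \<longleftrightarrow> cay_adj H S' (f x) (f y)))"

definition SD_graph_iso :: "nat \<Rightarrow> int set \<Rightarrow> int set \<Rightarrow> int set \<Rightarrow> int set \<Rightarrow> bool" where
  "SD_graph_iso n R T R' T' = cay_iso (SD_group n) (conn_set R T) (SD_group n) (conn_set R' T')"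

definition PSD_graph_iso :: "nat \<Rightarrow> int set \<Rightarrow> int set \<Rightarrow> int set \<Rightarrow> int set \<Rightarrow> bool" where
  "PSD_graph_iso n R T R' T' = cay_iso (PSD_group n) (conn_set R T) (PSD_group n) (conn_set R' T')"

end

theory Submission
  imports Defs
begin

text \<open>A group automorphism carrying one connection set onto another is an isomorphism
  of the Cayley graphs. On the group \<open>\<langle>\<rho>, \<tau>\<rangle>\<close> with \<open>\<tau>\<rho>\<tau> = \<rho>^k\<close>, the map
  \<open>\<rho>^i \<tau>^e \<mapsto> \<rho>^(a i + b e) \<tau>^e\<close> is an automorphism whenever \<open>a\<close> is a unit
  modulo \<open>2n\<close> and \<open>2n\<close> divides \<open>b (1 + k)\<close>; it sends the connection set of \<open>(R, T)\<close> to
  that of \<open>(aR, b + aT)\<close>. For even \<open>n\<close> both \<open>k = n - 1\<close> and \<open>k = n + 1\<close> satisfy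
  \<open>k\<^sup>2 = 1\<close> modulo \<open>2n\<close>; the divisibility holds for \<open>SD\<^sub>n\<close> when \<open>b\<close> is even and for
  \<open>PSD\<^sub>n\<close> when \<open>a = 1\<close>, \<open>b = n\<close>.\<close>

lemma cay_iso_image_iso:
  assumes "group G" and "f \<in> iso G G" and "S \<subseteq> carrier G"
  shows "cay_iso G S G (f ` S)"
  unfolding cay_iso_def
proof (intro exI conjI ballI)
  show bij: "bij_betw f (carrier G) (carrier G)"
    using \<open>f \<in> iso G G\<close> by (simp add: iso_def)
  interpret group_hom G G f
    using assms by (simp add: group_hom_def group_hom_axioms_def iso_def)
  fix x y assume x: "x \<in> carrier G" and y: "y \<in> carrier G"
  have "inv\<^bsub>G\<^esub> x \<otimes>\<^bsub>G\<^esub> y \<in> S \<longleftrightarrow> f (inv\<^bsub>G\<^esub> x \<otimes>\<^bsub>G\<^esub> y) \<in> f ` S"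
    using bij x y \<open>S \<subseteq> carrier G\<close> inj_on_image_mem_iff[of f "carrier G"]
    by (simp add: bij_betw_def del: hom_mult hom_inv)
  also have "f (inv\<^bsub>G\<^esub> x \<otimes>\<^bsub>G\<^esub> y) = inv\<^bsub>G\<^esub> f x \<otimes>\<^bsub>G\<^esub> f y"
    using x y by simp
  finally show "cay_adj G S x y \<longleftrightarrow> cay_adj G (f ` S) (f x) (f y)"
    unfolding cay_adj_def using x y by simp
qed

lemma rt_twist_power_mod:
  fixes k :: int
  assumes "k\<^sup>2 mod m = 1" and "e \<in> {0, 1}" and "f \<in> {0, 1}"
  shows "(k ^ nat e * (k ^ nat f * l)) mod m = (k ^ nat ((e + f) mod 2) * l) mod m"
proof -
  have "(k * (k * l)) mod m = l mod m"
    using assms(1) by (metis mod_mult_left_eq mult.assoc mult_1 power2_eq_square)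
  then show ?thesis
    using assms(2,3) by auto
qed

lemma group_rt_group:
  assumes "n > 0" and "k\<^sup>2 mod (2 * int n) = 1"
  shows "group (rt_group n k)"
proof -
  let ?G = "rt_group n k" and ?m = "2 * int n"
  show ?thesis
  proof (rule groupI)
    show "\<one>\<^bsub>?G\<^esub> \<in> carrier ?G" and "\<And>x y. x \<in> carrier ?G \<Longrightarrow> y \<in> carrier ?G \<Longrightarrow> x \<otimes>\<^bsub>?G\<^esub> y \<in> carrier ?G"
      and "\<And>x. x \<in> carrier ?G \<Longrightarrow> \<one>\<^bsub>?G\<^esub> \<otimes>\<^bsub>?G\<^esub> x = x"
      using \<open>n > 0\<close> by (auto simp: rt_group_def)
  next
    fix x y z assume "x \<in> carrier ?G" "y \<in> carrier ?G" "z \<in> carrier ?G"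
    then obtain i e j f l g where xyz: "x = (i, e)" "y = (j, f)" "z = (l, g)" "e \<in> {0, 1}" "f \<in> {0, 1}"
      by (auto simp: rt_group_def)
    have "((i + k ^ nat e * j) mod ?m + k ^ nat ((e + f) mod 2) * l) mod ?m
        = (i + k ^ nat e * j + k ^ nat e * (k ^ nat f * l)) mod ?m"
      using rt_twist_power_mod[OF assms(2) xyz(4,5), of l] by (metis mod_add_cong mod_add_left_eq)
    also have "\<dots> = (i + k ^ nat e * ((j + k ^ nat f * l) mod ?m)) mod ?m"
      by (metis add.assoc distrib_left mod_add_right_eq mod_mult_right_eq)
    finally show "x \<otimes>\<^bsub>?G\<^esub> y \<otimes>\<^bsub>?G\<^esub> z = x \<otimes>\<^bsub>?G\<^esub> (y \<otimes>\<^bsub>?G\<^esub> z)"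
      using xyz by (simp add: rt_group_def mod_add_left_eq mod_add_right_eq add.assoc)
  next
    fix x assume "x \<in> carrier ?G"
    then obtain i e where x: "x = (i, e)" "e \<in> {0, 1}"
      by (auto simp: rt_group_def)
    show "\<exists>y \<in> carrier ?G. y \<otimes>\<^bsub>?G\<^esub> x = \<one>\<^bsub>?G\<^esub>"
    proof (cases "e = 0")
      case True
      then show ?thesis
        using x \<open>n > 0\<close> by (intro bexI[of _ "((- i) mod ?m, 0)"]) (auto simp: rt_group_def mod_add_left_eq)
    next
      case False
      then show ?thesis
        using x \<open>n > 0\<close> by (intro bexI[of _ "((- k * i) mod ?m, 1)"]) (auto simp: rt_group_def mod_add_left_eq)
    qed
  qed
qed

definition rt_affine :: "nat \<Rightarrow> int \<Rightarrow> int \<Rightarrow> int \<times> int \<Rightarrow> int \<times> int" where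
  "rt_affine n a b = (\<lambda>(i, e). ((a * i + b * e) mod (2 * int n), e))"

lemma rt_affine_twist_mod:
  fixes k :: int
  assumes "e \<in> {0, 1}" and "g \<in> {0, 1}" and "m dvd b * (1 + k)"
  shows "(c + b * ((e + g) mod 2)) mod m = (c + b * e + k ^ nat e * (b * g)) mod m"
proof -
  have "(c + b + k * b) mod m = c mod m"
    using \<open>m dvd b * (1 + k)\<close> by (metis add.assoc distrib_left mult.commute mult_1 mod_add_right_eq
      dvd_imp_mod_0 add.right_neutral)
  then show ?thesis
    using assms(1,2) by auto
qed

lemma rt_affine_hom:
  assumes "2 * int n dvd b * (1 + k)"
  shows "rt_affine n a b \<in> hom (rt_group n k) (rt_group n k)"
proof (rule homI)
  let ?G = "rt_group n k" and ?m = "2 * int n"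
  show "\<And>x. x \<in> carrier ?G \<Longrightarrow> rt_affine n a b x \<in> carrier ?G"
    by (auto simp: rt_group_def rt_affine_def)
  fix x y assume "x \<in> carrier ?G" "y \<in> carrier ?G"
  then obtain i e j g where xy: "x = (i, e)" "y = (j, g)" "e \<in> {0, 1}" "g \<in> {0, 1}"
    by (auto simp: rt_group_def)
  have "(a * ((i + k ^ nat e * j) mod ?m) + b * ((e + g) mod 2)) mod ?m
      = (a * i + a * (k ^ nat e * j) + b * ((e + g) mod 2)) mod ?m"
    by (metis distrib_left mod_add_left_eq mod_mult_right_eq)
  also have "\<dots> = (a * i + a * (k ^ nat e * j) + b * e + k ^ nat e * (b * g)) mod ?m"
    using rt_affine_twist_mod[OF xy(3,4) assms] .
  also have "\<dots> = (a * i + b * e + k ^ nat e * (a * j + b * g)) mod ?m"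
    by (simp add: algebra_simps)
  also have "\<dots> = ((a * i + b * e) mod ?m + k ^ nat e * ((a * j + b * g) mod ?m)) mod ?m"
    by (metis mod_add_left_eq mod_add_right_eq mod_mult_right_eq)
  finally show "rt_affine n a b (x \<otimes>\<^bsub>?G\<^esub> y) = rt_affine n a b x \<otimes>\<^bsub>?G\<^esub> rt_affine n a b y"
    using xy by (simp add: rt_group_def rt_affine_def)
qed

lemma rt_affine_inj_on:
  assumes "coprime a (2 * int n)"
  shows "inj_on (rt_affine n a b) (carrier (rt_group n k))"
proof (rule inj_onI)
  let ?m = "2 * int n"
  fix x y assume "x \<in> carrier (rt_group n k)" "y \<in> carrier (rt_group n k)"
    and eq: "rt_affine n a b x = rt_affine n a b y"
  then obtain i e j where xy: "x = (i, e)" "y = (j, e)" "i \<in> {0..<?m}" "j \<in> {0..<?m}"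
    by (auto simp: rt_group_def rt_affine_def)
  have "(a * i + b * e) mod ?m = (a * j + b * e) mod ?m"
    using eq xy by (simp add: rt_affine_def)
  then have "?m dvd a * (i - j)"
    by (simp add: mod_eq_dvd_iff algebra_simps)
  then have "?m dvd i - j"
    using assms by (metis coprime_commute coprime_dvd_mult_right_iff)
  then show "x = y"
    using xy by (simp add: mod_eq_dvd_iff[symmetric])
qed

lemma rt_affine_iso:
  assumes "coprime a (2 * int n)" and "2 * int n dvd b * (1 + k)"
  shows "rt_affine n a b \<in> iso (rt_group n k) (rt_group n k)"
proof -
  let ?C = "carrier (rt_group n k)"
  have inj: "inj_on (rt_affine n a b) ?C"
    using assms(1) by (rule rt_affine_inj_on)
  have hom: "rt_affine n a b \<in> hom (rt_group n k) (rt_group n k)"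
    using assms(2) by (rule rt_affine_hom)
  then have "rt_affine n a b ` ?C \<subseteq> ?C"
    by (auto simp: hom_def)
  then have "rt_affine n a b ` ?C = ?C"
    using inj by (simp add: endo_inj_surj rt_group_def)
  then show ?thesis
    using inj hom by (simp add: iso_def bij_betw_def)
qed

lemma conn_set_eq_image:
  "conn_set R T = (\<lambda>i. (i, 0)) ` R \<union> (\<lambda>j. (j, 1)) ` T"
  by (auto simp: conn_set_def)

lemma rt_affine_image_conn_set:
  "rt_affine n a b ` conn_set R T = conn_set (zscale n a R) (zshift n b (zscale n a T))"
  unfolding conn_set_eq_image zscale_def zshift_def image_Un image_image
  by (intro arg_cong2[where f = "(\<union>)"] image_cong)
    (simp_all add: rt_affine_def mod_add_right_eq add.commute)

lemma conn_set_subset_rt_group: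
  assumes "R \<subseteq> {0..<2 * int n}" and "T \<subseteq> {0..<2 * int n}"
  shows "conn_set R T \<subseteq> carrier (rt_group n k)"
  using assms by (auto simp: conn_set_def rt_group_def)

lemma rt_cay_iso_affine:
  assumes "n > 0" and "k\<^sup>2 mod (2 * int n) = 1"
    and "coprime a (2 * int n)" and "2 * int n dvd b * (1 + k)"
    and "R \<subseteq> {0..<2 * int n}" and "T \<subseteq> {0..<2 * int n}"
  shows "cay_iso (rt_group n k) (conn_set R T) (rt_group n k)
           (conn_set (zscale n a R) (zshift n b (zscale n a T)))"
  using cay_iso_image_iso[OF group_rt_group[OF assms(1,2)] rt_affine_iso[OF assms(3,4)]
      conn_set_subset_rt_group[OF assms(5,6)]]
  by (simp add: rt_affine_image_conn_set)

lemma zscale_one: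
  assumes "I \<subseteq> {0..<2 * int n}"
  shows "zscale n 1 I = I"
proof -
  have "x mod (2 * int n) = x" if "x \<in> I" for x
    using assms that by auto
  then show ?thesis
    unfolding zscale_def by simp
qed

lemma square_neighbour_mod_double:
  assumes "even n" and "n > 0" and "c \<in> {-1, 1}"
  shows "(int n + c)\<^sup>2 mod (2 * int n) = 1"
proof -
  obtain q where "n = 2 * q"
    using \<open>even n\<close> ..
  then have "(int n + c)\<^sup>2 = 2 * int n * (int q + c) + 1" and "2 * int n > 1"
    using assms by (auto simp: power2_eq_square algebra_simps)
  then show ?thesis
    by simp
qed

lemma SD_graph_iso_affine:
  assumes "even n" and "n > 0" and "coprime a (2 * int n)" and "even b"
    and "R \<subseteq> {0..<2 * int n}" and "T \<subseteq> {0..<2 * int n}"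
  shows "SD_graph_iso n R T (zscale n a R) (zshift n b (zscale n a T))"
proof -
  have "(int n - 1)\<^sup>2 mod (2 * int n) = 1"
    using square_neighbour_mod_double[OF assms(1,2), of "-1"] by simp
  moreover have "2 * int n dvd b * (1 + (int n - 1))"
    using \<open>even b\<close> by auto
  ultimately show ?thesis
    unfolding SD_graph_iso_def SD_group_def using assms by (intro rt_cay_iso_affine) auto
qed

lemma PSD_graph_iso_shift_half:
  assumes "even n" and "n > 0" and "R \<subseteq> {0..<2 * int n}" and "T \<subseteq> {0..<2 * int n}"
  shows "PSD_graph_iso n R T R (zshift n (int n) T)"
proof -
  have "(int n + 1)\<^sup>2 mod (2 * int n) = 1"
    using square_neighbour_mod_double[OF assms(1,2), of 1] by simp
  moreover have "int n * 2 dvd int n * (1 + (int n + 1))"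
    using \<open>even n\<close> by (intro mult_dvd_mono) auto
  ultimately have "cay_iso (PSD_group n) (conn_set R T) (PSD_group n)
      (conn_set (zscale n 1 R) (zshift n (int n) (zscale n 1 T)))"
    unfolding PSD_group_def using assms by (intro rt_cay_iso_affine) (auto simp: mult.commute)
  then show ?thesis
    unfolding PSD_graph_iso_def using assms by (simp add: zscale_one)
qed

theorem lemma3p4:
  fixes r n :: nat and a b :: int and R T :: "int set"
  assumes "n = 2 ^ r" and "r \<ge> 1"
    and "a \<in> {0..<2 * int n}" and "coprime a (2 * int n)"
    and "b \<in> {0..<2 * int n}" and "even b"
    and "R \<subseteq> {0..<2 * int n}" and "0 \<notin> R" and "zscale n (-1) R = R"
    and "T \<subseteq> {0..<2 * int n}"
  shows "(zscale n (int n + 1) T = T \<longrightarrow>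
           SD_graph_iso n R T (zscale n a R) (zshift n b (zscale n a T)))
       \<and> (zscale n (int n - 1) T = T \<longrightarrow>
           PSD_graph_iso n R T R (zshift n (int n) T))"
proof -
  have "even n" and "n > 0"
    using assms(1,2) by auto
  then show ?thesis
    using SD_graph_iso_affine PSD_graph_iso_shift_half assms(4,6,7,10) by blast
qed

end
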